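(* Let $(M,g)$ be a super generalized recurrent manifold with associated 1-forms $\Pi,\Phi,\Psi,\Theta$, i.e. $$\nabla R = \Pi \otimes R + \Phi \otimes S\wedge S + \Psi \otimes g\wedge S + \Theta \otimes g\wedge g .$$ Then the associated 1-forms are linearly dependent with $d\kappa$, namely $$d\kappa = \kappa\, \Pi + 2(\kappa^2 - \kappa^{(2)})\, \Phi + 2(n-1)\left[\kappa\, \Psi + n\, \Theta\right],$$ where $\kappa^{(2)}=\mathrm{Tr}(S^2)$.
   Context: $(M,g)$ is a connected semi-Riemannian manifold of dimension $n\ge 3$ with Levi-Civita connection $\nabla$, curvature $(0,4)$-tensor $R$, Ricci tensor $S$ and scalar curvature $\kappa$, with $S(X,Y)=\sum_i \varepsilon_i R(e_i,X,Y,e_i)$ for a local orthonormal frame $\{e_i\}$, $\varepsilon_i=g(e_i,e_i)$. The Ricci operator $\mathscr S$ is defined by $g(\mathscr S X,Y)=S(X,Y)$ and $S^2(X,Y)=S(\mathscr S X,Y)$. For symmetric $(0,2)$-tensors $A,E$, $(A\wedge E)(X_1,X_2,Y_1,Y_2)=A(X_1,Y_2)E(X_2,Y_1)+A(X_2,Y_1)E(X_1,Y_2)-A(X_1,Y_1)E(X_2,Y_2)-A(X_2,Y_2)E(X_1,Y_1)$. $(\Pi\otimes T)(X,X_1,\dots)=\Pi(X)T(X_1,\dots)$ and $(\nabla T)(X,X_1,\dots)=(\nabla_XT)(X_1,\dots)$. A super generalized recurrent manifold ($SGK_n$) is one where the displayed identity holds on the set of points where $\nabla R-\xi\otimes R-\zeta\otimes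 S\wedge S-\theta\otimes g\wedge S\neq0$ for all 1-forms $\xi,\zeta,\theta$. *)

theory Defs
  imports "HOL-Analysis.Analysis"
begin

text \<open>Local coordinate description of a semi-Riemannian metric on an open
connected chart domain U of the space with coordinates indexed by the finite type 'n.
All tensors are given by their components with respect to the coordinate frame.\<close>

definition pd :: "'n::finite \<Rightarrow> (real^'n \<Rightarrow> real) \<Rightarrow> real^'n \<Rightarrow> real" where
  "pd a f x = frechet_derivative f (at x) (axis a 1)"

fun pds :: "'n::finite list \<Rightarrow> (real^'n \<Rightarrow> real) \<Rightarrow> real^'n \<Rightarrow> real" where
  "pds [] f = f"
| "pds (i # is) f = pd i (pds is f)"

definition smooth_on :: "(real^'n::finite) set \<Rightarrow> (real^'n \<Rightarrow> real) \<Rightarrow> bool" where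
  "smooth_on U f \<longleftrightarrow> (\<forall>is. pds is f differentiable_on U)"

definition semi_riemannian_metric :: "(real^'n::finite) set \<Rightarrow> (real^'n \<Rightarrow> real^'n^'n) \<Rightarrow> bool" where
  "semi_riemannian_metric U G \<longleftrightarrow>
     (\<forall>i j. smooth_on U (\<lambda>x. G x $ i $ j)) \<and>
     (\<forall>x\<in>U. transpose (G x) = G x \<and> det (G x) \<noteq> 0)"

definition ginv :: "(real^'n::finite \<Rightarrow> real^'n^'n) \<Rightarrow> real^'n \<Rightarrow> real^'n^'n" where
  "ginv G x = matrix_inv (G x)"

definition chr :: "(real^'n::finite \<Rightarrow> real^'n^'n) \<Rightarrow> 'n \<Rightarrow> 'n \<Rightarrow> 'n \<Rightarrow> real^'n \<Rightarrow> real" where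
  "chr G k i j x = (1/2) * (\<Sum>l\<in>UNIV. ginv G x $ k $ l *
      (pd i (\<lambda>y. G y $ j $ l) x + pd j (\<lambda>y. G y $ i $ l) x - pd l (\<lambda>y. G y $ i $ j) x))"

text \<open>R(\<partial>a,\<partial>b)\<partial>c = \<Sum>m Rup a b c m \<partial>m, with
  R(X,Y) = \<nabla>X\<nabla>Y - \<nabla>Y\<nabla>X - \<nabla>[X,Y].\<close>
definition Rup :: "(real^'n::finite \<Rightarrow> real^'n^'n) \<Rightarrow> 'n \<Rightarrow> 'n \<Rightarrow> 'n \<Rightarrow> 'n \<Rightarrow> real^'n \<Rightarrow> real" where
  "Rup G a b c m x = pd a (chr G m b c) x - pd b (chr G m a c) x
     + (\<Sum>p\<in>UNIV. chr G p b c x * chr G m a p x - chr G p a c x * chr G m b p x)"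

definition Curv :: "(real^'n::finite \<Rightarrow> real^'n^'n) \<Rightarrow> 'n \<Rightarrow> 'n \<Rightarrow> 'n \<Rightarrow> 'n \<Rightarrow> real^'n \<Rightarrow> real" where
  "Curv G a b c d x = (\<Sum>m\<in>UNIV. Rup G a b c m x * G x $ m $ d)"

text \<open>Ricci tensor S(X,Y) = \<Sum>i \<epsilon>i R(ei,X,Y,ei) (trace over first and last slot).\<close>
definition Ric :: "(real^'n::finite \<Rightarrow> real^'n^'n) \<Rightarrow> 'n \<Rightarrow> 'n \<Rightarrow> real^'n \<Rightarrow> real" where
  "Ric G b c x = (\<Sum>a\<in>UNIV. \<Sum>d\<in>UNIV. ginv G x $ a $ d * Curv G a b c d x)"

definition scal :: "(real^'n::finite \<Rightarrow> real^'n^'n) \<Rightarrow> real^'n \<Rightarrow> real" where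
  "scal G x = (\<Sum>b\<in>UNIV. \<Sum>c\<in>UNIV. ginv G x $ b $ c * Ric G b c x)"

text \<open>S^2(X,Y) = S(\<S>X,Y) and \<kappa>^(2) = Tr(S^2).\<close>
definition Ric2 :: "(real^'n::finite \<Rightarrow> real^'n^'n) \<Rightarrow> 'n \<Rightarrow> 'n \<Rightarrow> real^'n \<Rightarrow> real" where
  "Ric2 G a b x = (\<Sum>c\<in>UNIV. \<Sum>d\<in>UNIV. Ric G a c x * ginv G x $ c $ d * Ric G d b x)"

definition scal2 :: "(real^'n::finite \<Rightarrow> real^'n^'n) \<Rightarrow> real^'n \<Rightarrow> real" where
  "scal2 G x = (\<Sum>a\<in>UNIV. \<Sum>b\<in>UNIV. ginv G x $ a $ b * Ric2 G a b x)"

definition covR :: "(real^'n::finite \<Rightarrow> real^'n^'n) \<Rightarrow> 'n \<Rightarrow> 'n \<Rightarrow> 'n \<Rightarrow> 'n \<Rightarrow> 'n \<Rightarrow> real^'n \<Rightarrow> real" where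
  "covR G a b c d e x = pd a (Curv G b c d e) x
     - (\<Sum>p\<in>UNIV. chr G p a b x * Curv G p c d e x + chr G p a c x * Curv G b p d e x
                 + chr G p a d x * Curv G b c p e x + chr G p a e x * Curv G b c d p x)"

definition kulkarni :: "('n \<Rightarrow> 'n \<Rightarrow> real) \<Rightarrow> ('n \<Rightarrow> 'n \<Rightarrow> real) \<Rightarrow> 'n \<Rightarrow> 'n \<Rightarrow> 'n \<Rightarrow> 'n \<Rightarrow> real" where
  "kulkarni A E x1 x2 y1 y2 = A x1 y2 * E x2 y1 + A x2 y1 * E x1 y2
      - A x1 y1 * E x2 y2 - A x2 y2 * E x1 y1"

end

theory Submission
  imports Defs
begin

text \<open>Contract the defining identity with the inverse metric over the slot pairs (1,4) and
  (2,3).  Since the Levi-Civita connection is metric, the Christoffel terms of \<open>\<nabla>\<^sub>a R\<close>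
  contract to exactly the derivatives of the inverse metric, so the left-hand side becomes
  \<open>\<partial>\<^sub>a \<kappa>\<close>.  On the right-hand side \<open>R\<close>, \<open>S \<and> S\<close>, \<open>g \<and> S\<close> and \<open>g \<and> g\<close> contract to
  \<open>\<kappa>\<close>, \<open>2(\<kappa>\<^sup>2 - \<kappa>\<^sup>(\<^sup>2\<^sup>))\<close>, \<open>2(n - 1)\<kappa>\<close> and \<open>2n(n - 1)\<close>.\<close>

section \<open>Contractions with a bilinear form\<close>

definition trace2 :: "('n::finite \<Rightarrow> 'n \<Rightarrow> real) \<Rightarrow> ('n \<Rightarrow> 'n \<Rightarrow> real) \<Rightarrow> real" where
  "trace2 g A = (\<Sum>c\<in>UNIV. \<Sum>d\<in>UNIV. g c d * A c d)"

text \<open>Slots 1,4 are contracted first and then slots 2,3, in the order in which \<open>Ric\<close> and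
  \<open>scal\<close> contract \<open>Curv\<close>.\<close>
definition trace4 :: "('n::finite \<Rightarrow> 'n \<Rightarrow> real) \<Rightarrow> ('n \<Rightarrow> 'n \<Rightarrow> 'n \<Rightarrow> 'n \<Rightarrow> real) \<Rightarrow> real" where
  "trace4 g F = (\<Sum>c\<in>UNIV. \<Sum>d\<in>UNIV. g c d * (\<Sum>b\<in>UNIV. \<Sum>e\<in>UNIV. g b e * F b c d e))"

lemma trace4_add: "trace4 g (\<lambda>b c d e. F b c d e + F' b c d e) = trace4 g F + trace4 g F'"
  unfolding trace4_def by (simp add: distrib_left sum.distrib)

lemma trace4_diff: "trace4 g (\<lambda>b c d e. F b c d e - F' b c d e) = trace4 g F - trace4 g F'"
  unfolding trace4_def by (simp add: right_diff_distrib sum_subtractf)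

lemma trace4_scale: "trace4 g (\<lambda>b c d e. k * F b c d e) = k * trace4 g F"
  unfolding trace4_def by (simp add: sum_distrib_left mult_ac)

lemma sum_swap_pairs:
  fixes F :: "'n::finite \<Rightarrow> 'n \<Rightarrow> 'n \<Rightarrow> 'n \<Rightarrow> real"
  shows "(\<Sum>c\<in>UNIV. \<Sum>d\<in>UNIV. \<Sum>b\<in>UNIV. \<Sum>e\<in>UNIV. F b c d e)
       = (\<Sum>b\<in>UNIV. \<Sum>e\<in>UNIV. \<Sum>c\<in>UNIV. \<Sum>d\<in>UNIV. F b c d e)"
proof -
  have "(\<Sum>c\<in>UNIV. \<Sum>d\<in>UNIV. \<Sum>b\<in>UNIV. \<Sum>e\<in>UNIV. F b c d e)
      = (\<Sum>c\<in>UNIV. \<Sum>b\<in>UNIV. \<Sum>d\<in>UNIV. \<Sum>e\<in>UNIV. F b c d e)"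
    by (rule sum.cong[OF refl], rule sum.swap)
  also have "\<dots> = (\<Sum>b\<in>UNIV. \<Sum>c\<in>UNIV. \<Sum>e\<in>UNIV. \<Sum>d\<in>UNIV. F b c d e)"
    by (subst sum.swap) (rule sum.cong[OF refl], rule sum.cong[OF refl], rule sum.swap)
  also have "\<dots> = (\<Sum>b\<in>UNIV. \<Sum>e\<in>UNIV. \<Sum>c\<in>UNIV. \<Sum>d\<in>UNIV. F b c d e)"
    by (rule sum.cong[OF refl], rule sum.swap)
  finally show ?thesis .
qed

lemma sum_pairs_mult_swap:
  fixes f h :: "'n::finite \<Rightarrow> 'n \<Rightarrow> real"
  shows "(\<Sum>c\<in>UNIV. \<Sum>d\<in>UNIV. f c d * (\<Sum>b\<in>UNIV. \<Sum>e\<in>UNIV. h b e * F b c d e))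
       = (\<Sum>b\<in>UNIV. \<Sum>e\<in>UNIV. h b e * (\<Sum>c\<in>UNIV. \<Sum>d\<in>UNIV. f c d * F b c d e))"
  using sum_swap_pairs[of "\<lambda>b c d e. f c d * h b e * F b c d e"]
  by (simp add: sum_distrib_left mult_ac)

lemma trace4_kulkarni:
  "trace4 g (kulkarni A E) = 2 * trace2 g A * trace2 g E
     - trace4 g (\<lambda>b c d e. A b d * E c e) - trace4 g (\<lambda>b c d e. A c e * E b d)"
proof -
  have inner_trace: "(\<Sum>b\<in>UNIV. \<Sum>e\<in>UNIV. g b e * (X b e * k)) = trace2 g X * k" for X k
    unfolding trace2_def by (simp add: sum_distrib_right mult.assoc)
  have outer: "trace4 g (\<lambda>b c d e. A b e * E c d) = trace2 g A * trace2 g E"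
    unfolding trace4_def inner_trace by (simp add: trace2_def sum_distrib_left mult.left_commute)
  have inner: "trace4 g (\<lambda>b c d e. A c d * E b e) = trace2 g A * trace2 g E"
    unfolding trace4_def mult.commute[of "A _ _"] inner_trace
    by (simp add: trace2_def[of g A] sum_distrib_left mult_ac)
  have "kulkarni A E = (\<lambda>b c d e. A b e * E c d + A c d * E b e - A b d * E c e - A c e * E b d)"
    by (intro ext) (simp add: kulkarni_def)
  then show ?thesis by (simp only: trace4_diff trace4_add outer inner)
qed

lemma trace2_inverse:
  fixes g M :: "'n::finite \<Rightarrow> 'n \<Rightarrow> real"
  assumes inv: "\<And>b c. (\<Sum>d\<in>UNIV. g c d * M b d) = (if c = b then 1 else 0)"
  shows "trace2 g M = real CARD('n)"
  unfolding trace2_def inv by (simp add: mult_delta_left)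

lemma trace4_kulkarni_inverse:
  fixes g M E :: "'n::finite \<Rightarrow> 'n \<Rightarrow> real"
  assumes inv: "\<And>b c. (\<Sum>d\<in>UNIV. g c d * M b d) = (if c = b then 1 else 0)"
  shows "trace4 g (kulkarni M E) = 2 * (real CARD('n) - 1) * trace2 g E"
proof -
  have contract1: "(\<Sum>c\<in>UNIV. \<Sum>d\<in>UNIV. g c d * (M b d * E c e)) = E b e" for b e
  proof -
    have "(\<Sum>c\<in>UNIV. \<Sum>d\<in>UNIV. g c d * (M b d * E c e))
        = (\<Sum>c\<in>UNIV. (\<Sum>d\<in>UNIV. g c d * M b d) * E c e)"
      by (simp add: sum_distrib_right mult.assoc)
    then show ?thesis by (simp add: inv mult_delta_left)
  qed
  have contract2: "(\<Sum>b\<in>UNIV. \<Sum>e\<in>UNIV. g b e * (M c e * E b d)) = E c d" for c d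
  proof -
    have "(\<Sum>b\<in>UNIV. \<Sum>e\<in>UNIV. g b e * (M c e * E b d))
        = (\<Sum>b\<in>UNIV. (\<Sum>e\<in>UNIV. g b e * M c e) * E b d)"
      by (simp add: sum_distrib_right mult.assoc)
    then show ?thesis by (simp add: inv mult_delta_left)
  qed
  have mixed1: "trace4 g (\<lambda>b c d e. M b d * E c e) = trace2 g E"
    unfolding trace4_def by (subst sum_pairs_mult_swap) (simp only: contract1 trace2_def)
  have mixed2: "trace4 g (\<lambda>b c d e. M c e * E b d) = trace2 g E"
    unfolding trace4_def contract2 trace2_def ..
  show ?thesis
    unfolding trace4_kulkarni trace2_inverse[OF inv] mixed1 mixed2 by (simp add: algebra_simps)
qed

lemma trace4_kulkarni_self:
  "trace4 g (kulkarni S S) = 2 * (trace2 g S)\<^sup>2 - 2 * trace4 g (\<lambda>b c d e. S b d * S c e)"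
  unfolding trace4_kulkarni by (simp add: mult.commute power2_eq_square)

lemma trace4_square:
  fixes g S :: "'n::finite \<Rightarrow> 'n \<Rightarrow> real"
  assumes g_sym: "\<And>i j. g i j = g j i"
  shows "trace4 g (\<lambda>b c d e. S b d * S c e)
       = (\<Sum>a\<in>UNIV. \<Sum>b\<in>UNIV. g a b * (\<Sum>c\<in>UNIV. \<Sum>d\<in>UNIV. S a c * g c d * S d b))"
proof -
  have inner: "(\<Sum>i\<in>UNIV. \<Sum>j\<in>UNIV. g i j * (S i b * S a j))
      = (\<Sum>c\<in>UNIV. \<Sum>d\<in>UNIV. S a c * g c d * S d b)" for a b
  proof -
    have "(\<Sum>i\<in>UNIV. \<Sum>j\<in>UNIV. g i j * (S i b * S a j))
        = (\<Sum>j\<in>UNIV. \<Sum>i\<in>UNIV. g i j * (S i b * S a j))"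
      by (rule sum.swap)
    also have "\<dots> = (\<Sum>c\<in>UNIV. \<Sum>d\<in>UNIV. S a c * g c d * S d b)"
      by (intro sum.cong refl) (subst g_sym, simp add: mult_ac)
    finally show ?thesis .
  qed
  show ?thesis unfolding trace4_def inner ..
qed

lemma sum_swap3:
  fixes F :: "'n::finite \<Rightarrow> 'n \<Rightarrow> 'n \<Rightarrow> real"
  shows "(\<Sum>b\<in>UNIV. \<Sum>e\<in>UNIV. \<Sum>p\<in>UNIV. F b e p) = (\<Sum>p\<in>UNIV. \<Sum>e\<in>UNIV. \<Sum>b\<in>UNIV. F b e p)"
proof -
  have "(\<Sum>b\<in>UNIV. \<Sum>e\<in>UNIV. \<Sum>p\<in>UNIV. F b e p) = (\<Sum>b\<in>UNIV. \<Sum>p\<in>UNIV. \<Sum>e\<in>UNIV. F b e p)"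
    by (rule sum.cong[OF refl], rule sum.swap)
  also have "\<dots> = (\<Sum>p\<in>UNIV. \<Sum>b\<in>UNIV. \<Sum>e\<in>UNIV. F b e p)"
    by (rule sum.swap)
  also have "\<dots> = (\<Sum>p\<in>UNIV. \<Sum>e\<in>UNIV. \<Sum>b\<in>UNIV. F b e p)"
    by (rule sum.cong[OF refl], rule sum.swap)
  finally show ?thesis .
qed

lemma sum_connection_adjoint:
  fixes A K X :: "'n::finite \<Rightarrow> 'n \<Rightarrow> real"
  shows "(\<Sum>b\<in>UNIV. \<Sum>e\<in>UNIV. A b e * (\<Sum>p\<in>UNIV. K p b * X p e + K p e * X b p))
       = (\<Sum>b\<in>UNIV. \<Sum>e\<in>UNIV. (\<Sum>p\<in>UNIV. A p e * K b p + A b p * K e p) * X b e)"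
proof -
  have first: "(\<Sum>b\<in>UNIV. \<Sum>e\<in>UNIV. \<Sum>p\<in>UNIV. A b e * K p b * X p e)
      = (\<Sum>b\<in>UNIV. \<Sum>e\<in>UNIV. \<Sum>p\<in>UNIV. A p e * K b p * X b e)"
    by (rule sum_swap3)
  have second: "(\<Sum>b\<in>UNIV. \<Sum>e\<in>UNIV. \<Sum>p\<in>UNIV. A b e * K p e * X b p)
      = (\<Sum>b\<in>UNIV. \<Sum>e\<in>UNIV. \<Sum>p\<in>UNIV. A b p * K e p * X b e)"
    by (rule sum.cong[OF refl], rule sum.swap)
  have "(\<Sum>b\<in>UNIV. \<Sum>e\<in>UNIV. A b e * (\<Sum>p\<in>UNIV. K p b * X p e + K p e * X b p))
      = (\<Sum>b\<in>UNIV. \<Sum>e\<in>UNIV. \<Sum>p\<in>UNIV. A b e * K p b * X p e)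
      + (\<Sum>b\<in>UNIV. \<Sum>e\<in>UNIV. \<Sum>p\<in>UNIV. A b e * K p e * X b p)"
    by (simp add: sum_distrib_left sum.distrib algebra_simps)
  also have "\<dots> = (\<Sum>b\<in>UNIV. \<Sum>e\<in>UNIV. (\<Sum>p\<in>UNIV. A p e * K b p + A b p * K e p) * X b e)"
    unfolding first second by (simp add: sum.distrib sum_distrib_right distrib_right)
  finally show ?thesis .
qed


section \<open>Coordinate partial derivatives\<close>

lemma pd_eq_has_derivative: "(f has_derivative f') (at x) \<Longrightarrow> pd a f x = f' (axis a 1)"
  unfolding pd_def by (simp add: frechet_derivative_at[symmetric])

lemma pd_const: "pd a (\<lambda>y. c :: real) x = 0"
proof -
  have "((\<lambda>y. c) has_derivative (\<lambda>h. 0)) (at x)" by simp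
  from pd_eq_has_derivative[OF this] show ?thesis by simp
qed

lemma pd_add:
  assumes "f differentiable at x" "g differentiable at x"
  shows "pd a (\<lambda>y. f y + g y) x = pd a f x + pd a g x"
proof -
  from assms obtain f' g' where f: "(f has_derivative f') (at x)" and g: "(g has_derivative g') (at x)"
    unfolding differentiable_def by blast
  show ?thesis
    using pd_eq_has_derivative[OF has_derivative_add[OF f g]]
      pd_eq_has_derivative[OF f] pd_eq_has_derivative[OF g] by simp
qed

lemma pd_diff:
  assumes "f differentiable at x" "g differentiable at x"
  shows "pd a (\<lambda>y. f y - g y) x = pd a f x - pd a g x"
proof -
  from assms obtain f' g' where f: "(f has_derivative f') (at x)" and g: "(g has_derivative g') (at x)"
    unfolding differentiable_def by blast
  show ?thesis
    using pd_eq_has_derivative[OF has_derivative_diff[OF f g]]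
      pd_eq_has_derivative[OF f] pd_eq_has_derivative[OF g] by simp
qed

lemma pd_mult:
  assumes "f differentiable at x" "g differentiable at x"
  shows "pd a (\<lambda>y. f y * g y :: real) x = pd a f x * g x + f x * pd a g x"
proof -
  from assms obtain f' g' where f: "(f has_derivative f') (at x)" and g: "(g has_derivative g') (at x)"
    unfolding differentiable_def by blast
  show ?thesis
    using pd_eq_has_derivative[OF has_derivative_mult[OF f g]]
      pd_eq_has_derivative[OF f] pd_eq_has_derivative[OF g] by (simp add: mult.commute)
qed

lemma pd_sum:
  assumes "finite I" "\<And>i. i \<in> I \<Longrightarrow> f i differentiable at x"
  shows "pd a (\<lambda>y. \<Sum>i\<in>I. f i y :: real) x = (\<Sum>i\<in>I. pd a (f i) x)"
proof -
  obtain F where F: "\<And>i. i \<in> I \<Longrightarrow> (f i has_derivative F i) (at x)"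
    using assms(2) unfolding differentiable_def by metis
  show ?thesis
    using pd_eq_has_derivative[OF has_derivative_sum[OF F]] pd_eq_has_derivative[OF F] by simp
qed

lemma has_derivative_cong_open:
  assumes "open U" "x \<in> U" "\<And>y. y \<in> U \<Longrightarrow> f y = h y" "(h has_derivative h') (at x)"
  shows "(f has_derivative h') (at x)"
  by (rule has_derivative_transform_within_open[OF assms(4,1,2)]) (use assms(3) in auto)

lemma differentiable_cong_open:
  assumes "open U" "x \<in> U" "\<And>y. y \<in> U \<Longrightarrow> f y = h y" "h differentiable at x"
  shows "f differentiable at x"
  using assms has_derivative_cong_open unfolding differentiable_def by blast

lemma pd_cong_open:
  assumes "open U" "x \<in> U" "\<And>y. y \<in> U \<Longrightarrow> f y = h y" "h differentiable at x"
  shows "pd a f x = pd a h x"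
proof -
  obtain h' where h: "(h has_derivative h') (at x)"
    using assms(4) unfolding differentiable_def by blast
  show ?thesis
    using pd_eq_has_derivative[OF has_derivative_cong_open[OF assms(1-3) h]] pd_eq_has_derivative[OF h]
    by simp
qed

lemma pds_snoc: "pds (is @ [a]) f = pds is (pd a f)"
  by (induction "is") simp_all

lemma smooth_on_pd: "smooth_on U f \<Longrightarrow> smooth_on U (pd a f)"
  unfolding smooth_on_def by (metis pds_snoc)

text \<open>Enough regularity to differentiate the Christoffel symbols once more; unlike
  \<open>smooth_on\<close>, its closure under products needs only the first-order product rule.\<close>
definition twice_pd_differentiable_on :: "(real^'n::finite) set \<Rightarrow> (real^'n \<Rightarrow> real) \<Rightarrow> bool" where
  "twice_pd_differentiable_on U f \<longleftrightarrow>
     (\<forall>x\<in>U. f differentiable at x \<and> (\<forall>a. pd a f differentiable at x))"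

lemma twice_pd_differentiable_onD:
  assumes "twice_pd_differentiable_on U f" "x \<in> U"
  shows "f differentiable at x" and "pd a f differentiable at x"
  using assms unfolding twice_pd_differentiable_on_def by blast+

lemma twice_pd_differentiable_onI:
  assumes "open U" and "\<And>x. x \<in> U \<Longrightarrow> f differentiable at x"
    and "\<And>a x. x \<in> U \<Longrightarrow> pd a f x = f' a x" and "\<And>a x. x \<in> U \<Longrightarrow> f' a differentiable at x"
  shows "twice_pd_differentiable_on U f"
  unfolding twice_pd_differentiable_on_def
  using assms differentiable_cong_open[OF assms(1)] by metis

lemma smooth_on_imp_twice_pd_differentiable_on:
  assumes "open U" "smooth_on U f"
  shows "twice_pd_differentiable_on U f"
proof -
  have "pds [] f differentiable_on U" "\<And>a. pds [a] f differentiable_on U"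
    using assms(2) unfolding smooth_on_def by blast+
  then show ?thesis
    unfolding twice_pd_differentiable_on_def
    by (simp add: differentiable_on_eq_differentiable_at[OF assms(1)])
qed

lemma twice_pd_differentiable_on_const: "open U \<Longrightarrow> twice_pd_differentiable_on U (\<lambda>x. c)"
  by (rule twice_pd_differentiable_onI[where f' = "\<lambda>a x. 0"]) (simp_all add: pd_const)

lemma twice_pd_differentiable_on_add:
  assumes "open U" "twice_pd_differentiable_on U f" "twice_pd_differentiable_on U g"
  shows "twice_pd_differentiable_on U (\<lambda>x. f x + g x)"
  by (rule twice_pd_differentiable_onI[where f' = "\<lambda>a x. pd a f x + pd a g x", OF assms(1)])
    (use assms(2,3) in \<open>auto intro!: pd_add differentiable_add simp: twice_pd_differentiable_onD\<close>)

lemma twice_pd_differentiable_on_diff: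
  assumes "open U" "twice_pd_differentiable_on U f" "twice_pd_differentiable_on U g"
  shows "twice_pd_differentiable_on U (\<lambda>x. f x - g x)"
  by (rule twice_pd_differentiable_onI[where f' = "\<lambda>a x. pd a f x - pd a g x", OF assms(1)])
    (use assms(2,3) in \<open>auto intro!: pd_diff differentiable_diff simp: twice_pd_differentiable_onD\<close>)

lemma twice_pd_differentiable_on_mult:
  assumes "open U" "twice_pd_differentiable_on U f" "twice_pd_differentiable_on U g"
  shows "twice_pd_differentiable_on U (\<lambda>x. f x * g x)"
  by (rule twice_pd_differentiable_onI[where f' = "\<lambda>a x. pd a f x * g x + f x * pd a g x", OF assms(1)])
    (use assms(2,3) in \<open>auto intro!: pd_mult differentiable_mult simp: twice_pd_differentiable_onD\<close>)

lemma twice_pd_differentiable_on_sum: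
  assumes "open U" "finite I" "\<And>i. i \<in> I \<Longrightarrow> twice_pd_differentiable_on U (f i)"
  shows "twice_pd_differentiable_on U (\<lambda>x. \<Sum>i\<in>I. f i x)"
proof -
  have "f i differentiable at x" "pd a (f i) differentiable at x" if "i \<in> I" "x \<in> U" for i a x
    using twice_pd_differentiable_onD[OF assms(3)] that by blast+
  then show ?thesis
    by (intro twice_pd_differentiable_onI[where f' = "\<lambda>a x. \<Sum>i\<in>I. pd a (f i) x", OF assms(1)])
      (use assms(2) in \<open>auto intro!: pd_sum differentiable_sum\<close>)
qed


section \<open>Inverse matrices\<close>

lemma
  fixes A :: "real^'n::finite^'n"
  assumes "det A \<noteq> 0"
  shows matrix_mul_matrix_inv: "A ** matrix_inv A = mat 1"
    and matrix_inv_matrix_mul: "matrix_inv A ** A = mat 1"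
proof -
  have "\<exists>A'. A ** A' = mat 1 \<and> A' ** A = mat 1"
    using assms invertible_det_nz unfolding invertible_def by blast
  then have "A ** matrix_inv A = mat 1 \<and> matrix_inv A ** A = mat 1"
    unfolding matrix_inv_def by (rule someI_ex)
  then show "A ** matrix_inv A = mat 1" "matrix_inv A ** A = mat 1" by auto
qed

lemma matrix_inv_entry_cramer:
  fixes A :: "real^'n::finite^'n"
  assumes "det A \<noteq> 0"
  shows "matrix_inv A $ k $ j = det (\<chi> r s. if s = k then (if r = j then 1 else 0) else A $ r $ s) / det A"
proof -
  have "(\<Sum>k\<in>UNIV. A $ r $ k * matrix_inv A $ k $ j) = (if r = j then 1 else 0)" for r
    using arg_cong[where f = "\<lambda>M. M $ r $ j", OF matrix_mul_matrix_inv[OF assms]]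
    by (simp add: matrix_matrix_mult_def mat_def)
  then have "A *v (\<chi> k. matrix_inv A $ k $ j) = (\<chi> i. if i = j then 1 else 0)"
    by (simp add: vec_eq_iff matrix_vector_mult_def)
  from cramer[OF assms, THEN iffD1, OF this] show ?thesis
    unfolding vec_lambda_beta by (simp add: vec_eq_iff)
qed

lemma matrix_inv_symmetric:
  fixes A :: "real^'n::finite^'n"
  assumes "det A \<noteq> 0" "transpose A = A"
  shows "matrix_inv A $ i $ j = matrix_inv A $ j $ i"
proof -
  let ?B = "matrix_inv A"
  have "transpose ?B ** A = mat 1"
    using arg_cong[OF matrix_mul_matrix_inv[OF assms(1)], of transpose] assms(2)
    by (simp add: matrix_transpose_mul)
  then have "transpose ?B = transpose ?B ** (A ** ?B)"
    using matrix_mul_matrix_inv[OF assms(1)] by simp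
  also have "\<dots> = ?B"
    using \<open>transpose ?B ** A = mat 1\<close> by (simp add: matrix_mul_assoc)
  finally have "transpose ?B $ i $ j = ?B $ i $ j" by simp
  then show ?thesis by (simp add: transpose_def)
qed

lemma differentiable_prod:
  assumes "\<And>i. i \<in> I \<Longrightarrow> f i differentiable at x"
  shows "(\<lambda>y. \<Prod>i\<in>I. f i y :: real) differentiable at x"
proof -
  have "\<forall>i\<in>I. \<exists>f'. (f i has_derivative f') (at x)"
    using assms unfolding differentiable_def by blast
  from bchoice[OF this] obtain F where "\<forall>i\<in>I. (f i has_derivative F i) (at x)"
    by blast
  then have "((\<lambda>y. \<Prod>i\<in>I. f i y) has_derivative
      (\<lambda>h. \<Sum>i\<in>I. F i h * (\<Prod>j\<in>I - {i}. f j x))) (at x)"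
    by (intro has_derivative_prod) blast
  then show ?thesis
    unfolding differentiable_def by blast
qed

lemma det_differentiable:
  fixes M :: "real^'n::finite \<Rightarrow> real^'m::finite^'m"
  assumes "\<And>i j. (\<lambda>z. M z $ i $ j) differentiable at y"
  shows "(\<lambda>z. det (M z)) differentiable at y"
proof -
  have "(\<lambda>z. of_int (sign p) * (\<Prod>i\<in>UNIV. M z $ i $ p i)) differentiable at y" for p
    by (intro differentiable_mult differentiable_const differentiable_prod assms)
  then show ?thesis
    unfolding det_def by (intro differentiable_sum) auto
qed


section \<open>Curvature contractions in a chart\<close>

lemma trace4_ginv_Curv:
  "trace4 (\<lambda>i j. ginv G y $ i $ j) (\<lambda>b c d e. Curv G b c d e y) = scal G y"
  by (simp add: trace4_def scal_def Ric_def)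

lemma trace2_ginv_Ric: "trace2 (\<lambda>i j. ginv G y $ i $ j) (\<lambda>i j. Ric G i j y) = scal G y"
  by (simp add: trace2_def scal_def)

locale metric_chart =
  fixes U :: "(real^'n::finite) set" and G :: "real^'n \<Rightarrow> real^'n^'n"
  assumes metric: "semi_riemannian_metric U G" and open_U: "open U"
begin

lemma metric_smooth: "smooth_on U (\<lambda>z. G z $ i $ j)"
  using metric unfolding semi_riemannian_metric_def by blast

lemma metric_twice: "twice_pd_differentiable_on U (\<lambda>z. G z $ i $ j)"
  by (rule smooth_on_imp_twice_pd_differentiable_on[OF open_U metric_smooth])

lemma pd_metric_twice: "twice_pd_differentiable_on U (pd a (\<lambda>z. G z $ i $ j))"
  by (rule smooth_on_imp_twice_pd_differentiable_on[OF open_U smooth_on_pd[OF metric_smooth]])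

lemma metric_differentiable: "y \<in> U \<Longrightarrow> (\<lambda>z. G z $ i $ j) differentiable at y"
  using metric_twice by (rule twice_pd_differentiable_onD)

lemma pd_metric_differentiable: "y \<in> U \<Longrightarrow> pd a (\<lambda>z. G z $ i $ j) differentiable at y"
  using metric_twice by (rule twice_pd_differentiable_onD)

lemma det_metric_nonzero: "y \<in> U \<Longrightarrow> det (G y) \<noteq> 0"
  using metric unfolding semi_riemannian_metric_def by blast

lemma metric_transpose: "y \<in> U \<Longrightarrow> transpose (G y) = G y"
  using metric unfolding semi_riemannian_metric_def by blast

lemma metric_symmetric: "y \<in> U \<Longrightarrow> G y $ i $ j = G y $ j $ i"
  using arg_cong[where f = "\<lambda>M. M $ j $ i", OF metric_transpose] by (simp add: transpose_def)

lemma ginv_symmetric: "y \<in> U \<Longrightarrow> ginv G y $ i $ j = ginv G y $ j $ i"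
  unfolding ginv_def by (rule matrix_inv_symmetric[OF det_metric_nonzero metric_transpose])

lemma ginv_mult_metric:
  "y \<in> U \<Longrightarrow> (\<Sum>p\<in>UNIV. ginv G y $ b $ p * G y $ p $ e) = (if b = e then 1 else 0)"
  using arg_cong[where f = "\<lambda>M. M $ b $ e", OF matrix_inv_matrix_mul[OF det_metric_nonzero]]
  by (simp add: matrix_matrix_mult_def mat_def ginv_def)

lemma pd_metric_symmetric:
  "y \<in> U \<Longrightarrow> pd a (\<lambda>z. G z $ i $ j) y = pd a (\<lambda>z. G z $ j $ i) y"
  by (rule pd_cong_open[OF open_U _ _ metric_differentiable]) (auto intro: metric_symmetric)

lemma ginv_differentiable: "y \<in> U \<Longrightarrow> (\<lambda>z. ginv G z $ k $ j) differentiable at y"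
proof -
  assume y: "y \<in> U"
  define M where "M z = (\<chi> r s. if s = k then (if r = j then 1 else 0) else G z $ r $ s)"
    for z :: "real^'n"
  have "(\<lambda>z. M z $ r $ s) differentiable at y" for r s
    by (cases "s = k") (simp_all add: M_def metric_differentiable[OF y])
  then have "(\<lambda>z. det (M z)) differentiable at y"
    by (rule det_differentiable)
  moreover have "(\<lambda>z. det (G z)) differentiable at y"
    by (rule det_differentiable[OF metric_differentiable[OF y]])
  ultimately have "(\<lambda>z. det (M z) / det (G z)) differentiable at y"
    using det_metric_nonzero[OF y] by (rule differentiable_divide)
  moreover have "ginv G z $ k $ j = det (M z) / det (G z)" if "z \<in> U" for z
    unfolding ginv_def M_def by (rule matrix_inv_entry_cramer[OF det_metric_nonzero[OF that]])
  ultimately show ?thesis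
    by (rule differentiable_cong_open[OF open_U y, rotated])
qed

lemma pd_ginv_mult_metric:
  assumes y: "y \<in> U"
  shows "(\<Sum>p\<in>UNIV. pd a (\<lambda>z. ginv G z $ b $ p) y * G y $ p $ e)
       = - (\<Sum>p\<in>UNIV. ginv G y $ b $ p * pd a (\<lambda>z. G z $ p $ e) y)"
proof -
  have "pd a (\<lambda>z. \<Sum>p\<in>UNIV. ginv G z $ b $ p * G z $ p $ e) y
      = pd a (\<lambda>z. if b = e then 1 else 0) y"
    by (rule pd_cong_open[OF open_U y]) (simp_all add: ginv_mult_metric)
  also have "\<dots> = 0"
    by (rule pd_const)
  finally have "pd a (\<lambda>z. \<Sum>p\<in>UNIV. ginv G z $ b $ p * G z $ p $ e) y = 0" .
  moreover have "pd a (\<lambda>z. \<Sum>p\<in>UNIV. ginv G z $ b $ p * G z $ p $ e) y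
      = (\<Sum>p\<in>UNIV. pd a (\<lambda>z. ginv G z $ b $ p) y * G y $ p $ e
                    + ginv G y $ b $ p * pd a (\<lambda>z. G z $ p $ e) y)"
    using ginv_differentiable[OF y] metric_differentiable[OF y]
    by (simp add: pd_sum pd_mult)
  ultimately show ?thesis
    by (simp add: sum.distrib eq_neg_iff_add_eq_0)
qed

lemma pd_ginv:
  assumes y: "y \<in> U"
  shows "pd a (\<lambda>z. ginv G z $ b $ q) y
       = - (\<Sum>e\<in>UNIV. \<Sum>p\<in>UNIV. ginv G y $ b $ p * pd a (\<lambda>z. G z $ p $ e) y * ginv G y $ e $ q)"
proof -
  define D where "D = (\<chi> i j. pd a (\<lambda>z. ginv G z $ i $ j) y)"
  define N where "N = (\<chi> i e. - (\<Sum>p\<in>UNIV. ginv G y $ i $ p * pd a (\<lambda>z. G z $ p $ e) y))"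
  have "D ** G y = N"
    using pd_ginv_mult_metric[OF y] by (simp add: D_def N_def matrix_matrix_mult_def vec_eq_iff)
  have "D = D ** (G y ** ginv G y)"
    using matrix_mul_matrix_inv[OF det_metric_nonzero[OF y]] by (simp add: ginv_def)
  also have "\<dots> = N ** ginv G y"
    by (simp add: matrix_mul_assoc \<open>D ** G y = N\<close>)
  finally have "D $ b $ q = (N ** ginv G y) $ b $ q" by simp
  then show ?thesis
    by (simp add: D_def N_def matrix_matrix_mult_def sum_distrib_right sum_negf)
qed

lemma ginv_twice: "twice_pd_differentiable_on U (\<lambda>z. ginv G z $ k $ l)"
proof (rule twice_pd_differentiable_onI[OF open_U ginv_differentiable pd_ginv])
  fix a y assume y: "y \<in> U"
  show "(\<lambda>y. - (\<Sum>e\<in>UNIV. \<Sum>p\<in>UNIV. ginv G y $ k $ p * pd a (\<lambda>z. G z $ p $ e) y * ginv G y $ e $ l))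
      differentiable at y"
    by (intro differentiable_minus differentiable_sum differentiable_mult ballI finite
        ginv_differentiable pd_metric_differentiable y)
qed

lemma pd_ginv_christoffel:
  assumes y: "y \<in> U"
  shows "pd a (\<lambda>z. ginv G z $ b $ e) y
       = - (\<Sum>p\<in>UNIV. ginv G y $ p $ e * chr G b a p y + ginv G y $ b $ p * chr G e a p y)"
proof -
  define g where "g i j = ginv G y $ i $ j" for i j
  define A where "A p l = pd a (\<lambda>z. G z $ p $ l) y" for p l
  define B where "B p l = pd p (\<lambda>z. G z $ a $ l) y" for p l
  have chr_a: "chr G k a p y = 1/2 * (\<Sum>l\<in>UNIV. g k l * (A p l + B p l - B l p))" for k p
    unfolding chr_def g_def A_def B_def ..
  have first: "(\<Sum>p\<in>UNIV. g p e * chr G b a p y)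
      = (\<Sum>p\<in>UNIV. \<Sum>l\<in>UNIV. 1/2 * (g p e * g b l * (A p l + B p l - B l p)))"
    unfolding chr_a by (simp add: sum_distrib_left mult_ac)
  have "(\<Sum>p\<in>UNIV. g b p * chr G e a p y)
      = (\<Sum>p\<in>UNIV. \<Sum>l\<in>UNIV. 1/2 * (g b p * g e l * (A p l + B p l - B l p)))"
    unfolding chr_a by (simp add: sum_distrib_left mult_ac)
  also have "\<dots> = (\<Sum>l\<in>UNIV. \<Sum>p\<in>UNIV. 1/2 * (g b p * g e l * (A p l + B p l - B l p)))"
    by (rule sum.swap)
  finally have second: "(\<Sum>p\<in>UNIV. g b p * chr G e a p y)
      = (\<Sum>p\<in>UNIV. \<Sum>l\<in>UNIV. 1/2 * (g b l * g e p * (A l p + B l p - B p l)))" .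
  \<comment> \<open>the \<open>B\<close>-terms cancel in pairs and, by symmetry of \<open>g\<close> and \<open>\<partial>\<^sub>a G\<close>,
    the two \<open>A\<close>-terms agree\<close>
  have pair: "1/2 * (g p e * g b l * (A p l + B p l - B l p)) + 1/2 * (g b l * g e p * (A l p + B l p - B p l))
      = g b l * A l p * g p e" for p l
    using ginv_symmetric[OF y, of e p] pd_metric_symmetric[OF y, of a p l]
    unfolding g_def A_def by (simp add: algebra_simps)
  have "(\<Sum>p\<in>UNIV. g p e * chr G b a p y + g b p * chr G e a p y)
      = (\<Sum>p\<in>UNIV. \<Sum>l\<in>UNIV. g b l * A l p * g p e)"
    by (simp only: sum.distrib first second) (simp only: sum.distrib[symmetric] pair)
  also have "\<dots> = - pd a (\<lambda>z. ginv G z $ b $ e) y"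
    unfolding pd_ginv[OF y] g_def A_def by simp
  finally show ?thesis
    unfolding g_def by simp
qed

lemma ginv_contract_christoffel:
  assumes y: "y \<in> U"
  shows "(\<Sum>b\<in>UNIV. \<Sum>e\<in>UNIV. ginv G y $ b $ e * (\<Sum>p\<in>UNIV. chr G p a b y * X p e + chr G p a e y * X b p))
       = - (\<Sum>b\<in>UNIV. \<Sum>e\<in>UNIV. pd a (\<lambda>z. ginv G z $ b $ e) y * X b e)"
  unfolding sum_connection_adjoint pd_ginv_christoffel[OF y]
  by (simp add: sum_negf)

lemma chr_twice: "twice_pd_differentiable_on U (chr G k i j)"
proof -
  have chr_eq: "chr G k i j = (\<lambda>x. 1/2 * (\<Sum>l\<in>UNIV. ginv G x $ k $ l *
      (pd i (\<lambda>y. G y $ j $ l) x + pd j (\<lambda>y. G y $ i $ l) x - pd l (\<lambda>y. G y $ i $ j) x)))"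
    by (rule ext) (simp add: chr_def)
  show ?thesis
    unfolding chr_eq
    by (intro twice_pd_differentiable_on_mult twice_pd_differentiable_on_const
        twice_pd_differentiable_on_sum twice_pd_differentiable_on_add twice_pd_differentiable_on_diff
        ginv_twice pd_metric_twice open_U finite)
qed

lemma Curv_differentiable: "y \<in> U \<Longrightarrow> Curv G a b c d differentiable at y"
proof -
  assume y: "y \<in> U"
  have "(\<lambda>x. Curv G a b c d x) differentiable at y"
    unfolding Curv_def Rup_def
    by (intro differentiable_add differentiable_diff differentiable_mult differentiable_sum ballI finite
        twice_pd_differentiable_onD[OF chr_twice y] metric_differentiable[OF y])
  then show ?thesis by simp
qed

lemma pd_ginv_trace:
  assumes y: "y \<in> U" and h: "\<And>c d. h c d differentiable at y"
  shows "pd a (\<lambda>z. \<Sum>c\<in>UNIV. \<Sum>d\<in>UNIV. ginv G z $ c $ d * h c d z) y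
       = (\<Sum>c\<in>UNIV. \<Sum>d\<in>UNIV. pd a (\<lambda>z. ginv G z $ c $ d) y * h c d y
                                 + ginv G y $ c $ d * pd a (h c d) y)"
  using ginv_differentiable[OF y] h
  by (simp add: pd_sum pd_mult differentiable_sum differentiable_mult)

lemma Ric_as_trace: "Ric G c d = (\<lambda>z. \<Sum>b\<in>UNIV. \<Sum>e\<in>UNIV. ginv G z $ b $ e * Curv G b c d e z)"
  by (rule ext) (simp add: Ric_def)

lemma scal_as_trace: "scal G = (\<lambda>z. \<Sum>c\<in>UNIV. \<Sum>d\<in>UNIV. ginv G z $ c $ d * Ric G c d z)"
  by (rule ext) (simp add: scal_def)

lemma Ric_differentiable: "y \<in> U \<Longrightarrow> Ric G c d differentiable at y"
  unfolding Ric_as_trace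
  by (intro differentiable_mult differentiable_sum ballI finite ginv_differentiable Curv_differentiable)

lemma pd_scal_expand:
  assumes y: "y \<in> U"
  shows "pd a (scal G) y
       = (\<Sum>c\<in>UNIV. \<Sum>d\<in>UNIV. pd a (\<lambda>z. ginv G z $ c $ d) y * Ric G c d y)
       + (\<Sum>c\<in>UNIV. \<Sum>d\<in>UNIV. ginv G y $ c $ d *
            (\<Sum>b\<in>UNIV. \<Sum>e\<in>UNIV. pd a (\<lambda>z. ginv G z $ b $ e) y * Curv G b c d e y))
       + trace4 (\<lambda>i j. ginv G y $ i $ j) (\<lambda>b c d e. pd a (Curv G b c d e) y)"
  unfolding scal_as_trace pd_ginv_trace[OF y Ric_differentiable[OF y]]
  unfolding Ric_as_trace pd_ginv_trace[OF y Curv_differentiable[OF y]] trace4_def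
  by (simp only: sum.distrib distrib_left add.assoc)

lemma trace4_covR:
  assumes y: "y \<in> U"
  shows "trace4 (\<lambda>i j. ginv G y $ i $ j) (\<lambda>b c d e. covR G a b c d e y) = pd a (scal G) y"
proof -
  define g where "g i j = ginv G y $ i $ j" for i j
  define D where "D i j = pd a (\<lambda>z. ginv G z $ i $ j) y" for i j
  define T where "T b c d e = Curv G b c d e y" for b c d e
  define Gamma_be where "Gamma_be b c d e =
    (\<Sum>p\<in>UNIV. chr G p a b y * T p c d e + chr G p a e y * T b c d p)"
    for b c d e
  define Gamma_cd where "Gamma_cd b c d e =
    (\<Sum>p\<in>UNIV. chr G p a c y * T b p d e + chr G p a d y * T b c p e)"
    for b c d e
  have covR_split: "(\<lambda>b c d e. covR G a b c d e y)
      = (\<lambda>b c d e. pd a (Curv G b c d e) y - Gamma_be b c d e - Gamma_cd b c d e)"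
    unfolding covR_def Gamma_be_def Gamma_cd_def T_def sum.distrib by (intro ext) linarith
  have contract_be: "(\<Sum>b\<in>UNIV. \<Sum>e\<in>UNIV. g b e * Gamma_be b c d e)
      = - (\<Sum>b\<in>UNIV. \<Sum>e\<in>UNIV. D b e * T b c d e)"
    for c d
    unfolding Gamma_be_def g_def D_def by (rule ginv_contract_christoffel[OF y])
  have trace_Gamma_be: "trace4 g Gamma_be
      = - (\<Sum>c\<in>UNIV. \<Sum>d\<in>UNIV. g c d * (\<Sum>b\<in>UNIV. \<Sum>e\<in>UNIV. D b e * T b c d e))"
    unfolding trace4_def contract_be mult_minus_right sum_negf ..
  have contract_cd: "(\<Sum>c\<in>UNIV. \<Sum>d\<in>UNIV. g c d * Gamma_cd b c d e)
      = - (\<Sum>c\<in>UNIV. \<Sum>d\<in>UNIV. D c d * T b c d e)"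
    for b e
    unfolding Gamma_cd_def g_def D_def by (rule ginv_contract_christoffel[OF y])
  have "trace4 g Gamma_cd
      = (\<Sum>b\<in>UNIV. \<Sum>e\<in>UNIV. g b e * (\<Sum>c\<in>UNIV. \<Sum>d\<in>UNIV. g c d * Gamma_cd b c d e))"
    unfolding trace4_def by (rule sum_pairs_mult_swap)
  also have "\<dots> = - (\<Sum>b\<in>UNIV. \<Sum>e\<in>UNIV. g b e * (\<Sum>c\<in>UNIV. \<Sum>d\<in>UNIV. D c d * T b c d e))"
    unfolding contract_cd mult_minus_right sum_negf ..
  also have "\<dots> = - (\<Sum>c\<in>UNIV. \<Sum>d\<in>UNIV. D c d * (\<Sum>b\<in>UNIV. \<Sum>e\<in>UNIV. g b e * T b c d e))"
    by (rule arg_cong[where f = uminus], rule sum_pairs_mult_swap[symmetric])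
  also have "\<dots> = - (\<Sum>c\<in>UNIV. \<Sum>d\<in>UNIV. D c d * Ric G c d y)"
    unfolding g_def T_def Ric_def ..
  finally have trace_Gamma_cd: "trace4 g Gamma_cd = \<dots>" .
  show ?thesis
    unfolding g_def[symmetric] covR_split trace4_diff trace_Gamma_be trace_Gamma_cd pd_scal_expand[OF y]
    unfolding g_def D_def T_def by linarith
qed

lemma ginv_contract_metric:
  "y \<in> U \<Longrightarrow> (\<Sum>d\<in>UNIV. ginv G y $ c $ d * G y $ b $ d) = (if c = b then 1 else 0)"
  using ginv_mult_metric by (simp add: metric_symmetric[of y b])

lemma trace2_ginv_metric:
  "y \<in> U \<Longrightarrow> trace2 (\<lambda>i j. ginv G y $ i $ j) (\<lambda>i j. G y $ i $ j) = real CARD('n)"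
  by (rule trace2_inverse) (rule ginv_contract_metric)

lemma trace4_ginv_kulkarni_metric:
  "y \<in> U \<Longrightarrow> trace4 (\<lambda>i j. ginv G y $ i $ j) (kulkarni (\<lambda>i j. G y $ i $ j) E)
     = 2 * (real CARD('n) - 1) * trace2 (\<lambda>i j. ginv G y $ i $ j) E"
  by (rule trace4_kulkarni_inverse) (rule ginv_contract_metric)

lemma trace4_ginv_kulkarni_Ric:
  assumes y: "y \<in> U"
  shows "trace4 (\<lambda>i j. ginv G y $ i $ j) (kulkarni (\<lambda>i j. Ric G i j y) (\<lambda>i j. Ric G i j y))
     = 2 * (scal G y)\<^sup>2 - 2 * scal2 G y"
proof -
  have "trace4 (\<lambda>i j. ginv G y $ i $ j) (\<lambda>b c d e. Ric G b d y * Ric G c e y) = scal2 G y"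
    by (simp add: trace4_square ginv_symmetric[OF y] scal2_def Ric2_def)
  then show ?thesis
    unfolding trace4_kulkarni_self trace2_ginv_Ric by simp
qed

end


theorem theorem3p2:
  fixes G :: "real^'n::finite \<Rightarrow> real^'n^'n" and U :: "(real^'n) set"
    and Pi Phi Psi Theta :: "real^'n \<Rightarrow> 'n \<Rightarrow> real"
  assumes "CARD('n) \<ge> 3" and "open U" and "connected U"
    and "semi_riemannian_metric U G"
    and "\<forall>x\<in>U. \<forall>a b c d e. covR G a b c d e x =
            Pi x a * Curv G b c d e x
          + Phi x a * kulkarni (\<lambda>i j. Ric G i j x) (\<lambda>i j. Ric G i j x) b c d e
          + Psi x a * kulkarni (\<lambda>i j. G x $ i $ j) (\<lambda>i j. Ric G i j x) b c d e
          + Theta x a * kulkarni (\<lambda>i j. G x $ i $ j) (\<lambda>i j. G x $ i $ j) b c d e"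
  shows "\<forall>x\<in>U. \<forall>a. pd a (scal G) x =
            scal G x * Pi x a + 2 * ((scal G x)^2 - scal2 G x) * Phi x a
          + 2 * (real CARD('n) - 1) * (scal G x * Psi x a + real CARD('n) * Theta x a)"
proof (intro ballI allI)
  fix x a assume x: "x \<in> U"
  interpret metric_chart U G
    using assms(2,4) by unfold_locales
  let ?g = "\<lambda>i j. ginv G x $ i $ j"
  have "pd a (scal G) x = trace4 ?g (\<lambda>b c d e. covR G a b c d e x)"
    by (rule trace4_covR[OF x, symmetric])
  also have "\<dots> = Pi x a * trace4 ?g (\<lambda>b c d e. Curv G b c d e x)
      + Phi x a * trace4 ?g (kulkarni (\<lambda>i j. Ric G i j x) (\<lambda>i j. Ric G i j x))
      + Psi x a * trace4 ?g (kulkarni (\<lambda>i j. G x $ i $ j) (\<lambda>i j. Ric G i j x))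
      + Theta x a * trace4 ?g (kulkarni (\<lambda>i j. G x $ i $ j) (\<lambda>i j. G x $ i $ j))"
    using assms(5) x by (simp add: trace4_add trace4_scale)
  also have "\<dots> = Pi x a * scal G x + Phi x a * (2 * (scal G x)\<^sup>2 - 2 * scal2 G x)
      + Psi x a * (2 * (real CARD('n) - 1) * scal G x)
      + Theta x a * (2 * (real CARD('n) - 1) * real CARD('n))"
    unfolding trace4_ginv_Curv trace4_ginv_kulkarni_Ric[OF x] trace4_ginv_kulkarni_metric[OF x]
      trace2_ginv_Ric trace2_ginv_metric[OF x] ..
  finally show "pd a (scal G) x =
      scal G x * Pi x a + 2 * ((scal G x)^2 - scal2 G x) * Phi x a
    + 2 * (real CARD('n) - 1) * (scal G x * Psi x a + real CARD('n) * Theta x a)"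
    by (simp add: algebra_simps)
qed

end
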